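(* Let $1\le p<\infty$, $E=\mathcal{L}^p(I)$, and assume $\Lambda<1/2$. If $(b_m)$ is a Schauder basis of $E$, then $(b_m-0*_Tb_m)$ is a Schauder basis of $E$. Furthermore, if the $\alpha_n$ are constant functions and $(b_m)$ is a bounded Schauder basis of $E$, then $(b_m-0*_Tb_m)$ is also bounded.
   Context: Let $N\ge 2$, $I=[x_0,x_N]$, $\Delta: x_0<\dots<x_N$ a partition, $L_n(x)=a_nx+b_n$ affine with $L_n(x_0)=x_{n-1}$, $L_n(x_N)=x_n$, $I_1=[x_0,x_1]$, $I_n=(x_{n-1},x_n]$ for $n\ge2$, and $\alpha=(\alpha_1,\dots,\alpha_N)\in(\mathcal{L}^\infty(I))^N$ with $\Lambda:=\operatorname{ess\,sup}\{|\alpha_n(x)|:x\in I,n=1,\dots,N\}<1$. For $f,b\in E$, $f*_Tb$ is the unique fixed point in $E$ of the contraction $Tg(x):=f(x)+\alpha_n(L_n^{-1}(x))(g-b)(L_n^{-1}(x))$, $x\in I_n$; $0$ is the null function. A sequence $(x_m)$ is bounded if there are constants $0<k\le K$ with $k\le\|x_m\|_p\le K$ for all $m$. *)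

theory Defs
  imports "HOL-Analysis.Analysis" "HOL-Probability.Essential_Supremum"
begin

(* L^p(M) as a set of representatives (elements of E are identified a.e.) *)
definition Lp_space :: "real \<Rightarrow> real measure \<Rightarrow> (real \<Rightarrow> real) set" where
  "Lp_space p M = {f. f \<in> borel_measurable M \<and> integrable M (\<lambda>t. \<bar>f t\<bar> powr p)}"

definition Lp_norm :: "real \<Rightarrow> real measure \<Rightarrow> (real \<Rightarrow> real) \<Rightarrow> real" where
  "Lp_norm p M f = (\<integral>t. \<bar>f t\<bar> powr p \<partial>M) powr (1 / p)"

definition schauder_basis :: "real \<Rightarrow> real measure \<Rightarrow> (nat \<Rightarrow> real \<Rightarrow> real) \<Rightarrow> bool" where
  "schauder_basis p M b \<longleftrightarrow> (\<forall>m. b m \<in> Lp_space p M) \<and>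
     (\<forall>f \<in> Lp_space p M. \<exists>!c :: nat \<Rightarrow> real.
        (\<lambda>n. Lp_norm p M (\<lambda>t. f t - (\<Sum>m<n. c m * b m t))) \<longlonglongrightarrow> 0)"

definition bounded_seq :: "real \<Rightarrow> real measure \<Rightarrow> (nat \<Rightarrow> real \<Rightarrow> real) \<Rightarrow> bool" where
  "bounded_seq p M b \<longleftrightarrow> (\<exists>k K. 0 < k \<and> k \<le> K \<and>
     (\<forall>m. k \<le> Lp_norm p M (b m) \<and> Lp_norm p M (b m) \<le> K))"

definition Isub :: "(nat \<Rightarrow> real) \<Rightarrow> nat \<Rightarrow> real set" where
  "Isub x n = (if n = 1 then {x 0..x 1} else {x (n - 1)<..x n})"

(* inverse of the affine map L_n with L_n(x_0) = x_{n-1}, L_n(x_N) = x_n *)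
definition Linv :: "(nat \<Rightarrow> real) \<Rightarrow> nat \<Rightarrow> nat \<Rightarrow> real \<Rightarrow> real" where
  "Linv x N n y = x 0 + (y - x (n - 1)) * (x N - x 0) / (x n - x (n - 1))"

definition Top :: "(nat \<Rightarrow> real) \<Rightarrow> nat \<Rightarrow> (nat \<Rightarrow> real \<Rightarrow> real) \<Rightarrow> (real \<Rightarrow> real)
    \<Rightarrow> (real \<Rightarrow> real) \<Rightarrow> (real \<Rightarrow> real) \<Rightarrow> real \<Rightarrow> real" where
  "Top x N \<alpha> f b g y = f y + (\<Sum>n\<in>{1..N}. if y \<in> Isub x n then
       \<alpha> n (Linv x N n y) * (g (Linv x N n y) - b (Linv x N n y)) else 0)"

(* f *_T b : the (a.e.-unique) fixed point of T in E = L^p(I) *)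
definition frac_op :: "real \<Rightarrow> (nat \<Rightarrow> real) \<Rightarrow> nat \<Rightarrow> (nat \<Rightarrow> real \<Rightarrow> real) \<Rightarrow> (real \<Rightarrow> real)
    \<Rightarrow> (real \<Rightarrow> real) \<Rightarrow> real \<Rightarrow> real" where
  "frac_op p x N \<alpha> f b = (SOME g. g \<in> Lp_space p (lebesgue_on {x 0..x N}) \<and>
      (AE y in lebesgue_on {x 0..x N}. g y = Top x N \<alpha> f b g y))"

end

theory Submission
  imports Defs
begin

(*
  On I_n the map phi = L_n^{-1} sends I_n onto I, and phi preserves Lebesgue measure on I
  because the slopes of the L_n add up to 1.  With a(y) = alpha_n(phi y) on I_n the operator
  reads T g = f + a (g o phi - b o phi), so g = 0 *_T b satisfies g = a (g o phi - b o phi),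
  and D = b - g solves B D = b for B h = h - a (h o phi).  As |a| <= 1/2 and phi preserves
  measure, the inequality |u + v|^p <= 2^(p-1) (|u|^p + |v|^p) gives ||B h|| <= 2 ||h|| and
  ||h|| <= 2 ||B h||.  Hence f = sum c_m D_m in L^p iff B f = sum c_m b_m, so (D_m) inherits
  the basis property, and boundedness, from (b_m).  The fixed point g exists because the
  Neumann series sum_k a(y) a(phi y) ... a(phi^(k-1) y) b(phi^k y) converges in L^p, by
  Jensen's inequality for the weights 2^(-k-1).
*)

section \<open>Convexity of powers\<close>

lemma convex_on_powr_nonneg:
  assumes p: "1 \<le> p"
  shows "convex_on {0::real..} (\<lambda>x. x powr p)"
proof (rule convex_onI)
  fix t u v :: real assume t: "0 < t" "t < 1" and uv: "u \<in> {0..}" "v \<in> {0..}"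
  have scaled: "(s * w) powr p \<le> s * w powr p" if "0 \<le> s" "s \<le> 1" "0 \<le> w" for s w :: real
  proof (cases "s = 0")
    case False
    then have "s powr p \<le> s" using that p by (intro powr_le_one_le) auto
    then show ?thesis using that by (simp add: powr_mult mult_right_mono)
  qed simp
  consider "u = 0" | "v = 0" | "0 < u" "0 < v" using uv by force
  then show "((1 - t) *\<^sub>R u + t *\<^sub>R v) powr p \<le> (1 - t) * u powr p + t * v powr p"
  proof cases
    case 1 then show ?thesis using scaled[of t v] t uv p by simp
  next
    case 2 then show ?thesis using scaled[of "1 - t" u] t uv p by simp
  next
    case 3 then show ?thesis using convex_onD[OF powr_convex[OF p], of t u v] t by simp
  qed
qed simp

lemma abs_add_powr_le:
  fixes u v p :: real assumes p: "1 \<le> p"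
  shows "\<bar>u + v\<bar> powr p \<le> 2 powr (p - 1) * (\<bar>u\<bar> powr p + \<bar>v\<bar> powr p)"
proof -
  have "\<bar>u + v\<bar> powr p \<le> (\<bar>u\<bar> + \<bar>v\<bar>) powr p"
    using p by (intro powr_mono2) auto
  also have "\<dots> = 2 powr p * ((1 - 1/2) *\<^sub>R \<bar>u\<bar> + (1/2) *\<^sub>R \<bar>v\<bar>) powr p"
    using powr_mult[of 2 "(\<bar>u\<bar> + \<bar>v\<bar>) / 2" p] by (simp add: add_divide_distrib)
  also have "\<dots> \<le> 2 powr p * ((1 - 1/2) * \<bar>u\<bar> powr p + 1/2 * \<bar>v\<bar> powr p)"
    by (intro mult_left_mono convex_onD[OF convex_on_powr_nonneg[OF p]]) auto
  also have "\<dots> = 2 powr (p - 1) * (\<bar>u\<bar> powr p + \<bar>v\<bar> powr p)"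
    by (simp add: powr_diff field_simps)
  finally show ?thesis .
qed

lemma weighted_sum_powr_le:
  fixes w c :: "'a \<Rightarrow> real"
  assumes p: "1 \<le> p" and S: "finite S" and w: "\<And>i. 0 \<le> w i" and c: "\<And>i. 0 \<le> c i"
    and total: "sum w S \<le> 1"
  shows "(\<Sum>i\<in>S. w i * c i) powr p \<le> (\<Sum>i\<in>S. w i * c i powr p)"
proof (cases "sum w S = 0")
  case True
  then have "\<forall>i\<in>S. w i = 0" using S w by (simp add: sum_nonneg_eq_0_iff)
  then show ?thesis by simp
next
  case False
  define W where "W = sum w S"
  have W: "0 < W" "W \<le> 1" using False w total by (auto simp: W_def sum_nonneg order_le_neq_trans)
  \<comment> \<open>Jensen for the normalized weights \<open>w i / W\<close>, then \<open>W powr (p - 1) \<le> 1\<close>\<close>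
  have "((\<Sum>i\<in>S. w i * c i) / W) powr p = (\<Sum>i\<in>S. (w i / W) *\<^sub>R c i) powr p"
    by (simp add: sum_divide_distrib)
  also have "\<dots> \<le> (\<Sum>i\<in>S. (w i / W) * c i powr p)"
    using S False W w c
    by (intro convex_on_sum[OF _ _ convex_on_powr_nonneg[OF p]])
       (auto simp: W_def sum_divide_distrib[symmetric])
  also have "\<dots> = (\<Sum>i\<in>S. w i * c i powr p) / W"
    by (simp add: sum_divide_distrib)
  finally have "(\<Sum>i\<in>S. w i * c i) powr p \<le> W powr (p - 1) * (\<Sum>i\<in>S. w i * c i powr p)"
    using W by (simp add: powr_divide powr_diff divide_le_eq field_simps sum_nonneg w c)
  also have "\<dots> \<le> (\<Sum>i\<in>S. w i * c i powr p)"
    using W p by (intro mult_left_le_one_le powr_le1 sum_nonneg) (auto simp: w)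
  finally show ?thesis .
qed

lemma weighted_suminf_powr_le:
  fixes w c :: "nat \<Rightarrow> real"
  assumes p: "1 \<le> p" and w: "\<And>k. 0 \<le> w k" and c: "\<And>k. 0 \<le> c k"
    and total: "summable w" "suminf w \<le> 1"
    and sums: "summable (\<lambda>k. w k * c k)" "summable (\<lambda>k. w k * c k powr p)"
  shows "(\<Sum>k. w k * c k) powr p \<le> (\<Sum>k. w k * c k powr p)"
proof (rule LIMSEQ_le)
  show "(\<lambda>n. (\<Sum>k<n. w k * c k) powr p) \<longlonglongrightarrow> (\<Sum>k. w k * c k) powr p"
    using p w c by (intro tendsto_powr'[OF summable_LIMSEQ[OF sums(1)] tendsto_const])
       (auto intro!: always_eventually sum_nonneg)
  show "(\<lambda>n. \<Sum>k<n. w k * c k powr p) \<longlonglongrightarrow> (\<Sum>k. w k * c k powr p)"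
    by (rule summable_LIMSEQ[OF sums(2)])
  have "(\<Sum>k<n. w k) \<le> 1" for n
    using sum_le_suminf[OF total(1), of "{..<n}"] w total(2) by auto
  then have "(\<Sum>k<n. w k * c k) powr p \<le> (\<Sum>k<n. w k * c k powr p)" for n
    by (rule weighted_sum_powr_le[OF p finite_lessThan w c])
  then show "\<exists>N. \<forall>n\<ge>N. (\<Sum>k<n. w k * c k) powr p \<le> (\<Sum>k<n. w k * c k powr p)"
    by blast
qed

lemma geometric_dominated_series_powr:
  fixes t c :: "nat \<Rightarrow> real"
  assumes p: "1 \<le> p" and c: "\<And>k. 0 \<le> c k" and dominated: "\<And>k. \<bar>t k\<bar> \<le> (1/2)^k * c k"
    and summable_powr: "summable (\<lambda>k. (1/2)^Suc k * c k powr p)"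
  shows "summable (\<lambda>k. \<bar>t k\<bar>)"
    and "\<bar>suminf t\<bar> powr p \<le> 2 powr p * (\<Sum>k. (1/2)^Suc k * c k powr p)"
proof -
  have geometric: "summable (\<lambda>k. (1/2::real)^Suc k)" "(\<Sum>k. (1/2::real)^Suc k) = 1"
    using power_half_series by (auto simp: sums_iff)
  have "c k \<le> 1 + c k powr p" for k
  proof (cases "c k \<le> 1")
    case False
    then have "c k powr 1 \<le> c k powr p" using p by (intro powr_mono) auto
    then show ?thesis using False by simp
  qed (simp add: add_increasing2)
  then have "(1/2)^Suc k * c k \<le> (1/2)^Suc k * (1 + c k powr p)" for k
    by (intro mult_left_mono) simp_all
  then have summable_c: "summable (\<lambda>k. (1/2)^Suc k * c k)"
    using c by (intro summable_comparison_test[OF _ summable_add[OF geometric(1) summable_powr]])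
      (auto simp: distrib_left)
  have "\<bar>t k\<bar> \<le> 2 * ((1/2)^Suc k * c k)" for k
    using dominated[of k] by simp
  then show summable_t: "summable (\<lambda>k. \<bar>t k\<bar>)"
    by (intro summable_comparison_test[OF _ summable_mult[OF summable_c, of 2]]) auto
  have "\<bar>suminf t\<bar> \<le> (\<Sum>k. \<bar>t k\<bar>)"
    by (rule summable_rabs[OF summable_t])
  also have "\<dots> \<le> (\<Sum>k. 2 * ((1/2)^Suc k * c k))"
    by (intro suminf_le summable_t summable_mult summable_c) (use dominated in simp)
  also have "\<dots> = 2 * (\<Sum>k. (1/2)^Suc k * c k)"
    by (rule suminf_mult[OF summable_c])
  finally have "\<bar>suminf t\<bar> powr p \<le> (2 * (\<Sum>k. (1/2)^Suc k * c k)) powr p"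
    using p by (intro powr_mono2) auto
  also have "\<dots> = 2 powr p * (\<Sum>k. (1/2)^Suc k * c k) powr p"
    using c by (simp add: powr_mult suminf_nonneg summable_c)
  also have "\<dots> \<le> 2 powr p * (\<Sum>k. (1/2)^Suc k * c k powr p)"
    using geometric c
    by (intro mult_left_mono weighted_suminf_powr_le[OF p _ c _ _ summable_c summable_powr]) auto
  finally show "\<bar>suminf t\<bar> powr p \<le> 2 powr p * (\<Sum>k. (1/2)^Suc k * c k powr p)" .
qed

lemma powr_le_powr_imp_le:
  fixes u v p :: real
  assumes "0 < p" "0 \<le> u" "0 \<le> v" "u powr p \<le> v powr p"
  shows "u \<le> v"
  using powr_less_mono2[of p v u] assms by linarith

section \<open>Lebesgue spaces\<close>

lemma Lp_space_measurable: "f \<in> Lp_space p M \<Longrightarrow> f \<in> borel_measurable M"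
  by (simp add: Lp_space_def)

lemma Lp_space_iff_nn_integral:
  "f \<in> Lp_space p M \<longleftrightarrow> f \<in> borel_measurable M \<and> (\<integral>\<^sup>+t. \<bar>f t\<bar> powr p \<partial>M) < \<infinity>"
  by (auto simp: Lp_space_def integrable_iff_bounded)

lemma Lp_norm_nonneg: "0 \<le> Lp_norm p M f"
  by (simp add: Lp_norm_def)

lemma Lp_norm_powr:
  assumes "0 < p"
  shows "Lp_norm p M f powr p = (\<integral>t. \<bar>f t\<bar> powr p \<partial>M)"
proof -
  have "0 \<le> (\<integral>t. \<bar>f t\<bar> powr p \<partial>M)" by simp
  then show ?thesis using assms by (simp add: Lp_norm_def powr_powr)
qed

lemma Lp_norm_mono_AE:
  assumes p: "0 < p" and g: "g \<in> Lp_space p M" and h: "h \<in> borel_measurable M" and c: "0 \<le> c"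
    and dominated: "AE t in M. \<bar>h t\<bar> \<le> c * \<bar>g t\<bar>"
  shows "h \<in> Lp_space p M" and "Lp_norm p M h \<le> c * Lp_norm p M g"
proof -
  have powr_dominated: "AE t in M. \<bar>h t\<bar> powr p \<le> c powr p * \<bar>g t\<bar> powr p"
    using dominated by eventually_elim (use p c in \<open>auto simp: powr_mult[symmetric] intro: powr_mono2\<close>)
  have int_g: "integrable M (\<lambda>t. c powr p * \<bar>g t\<bar> powr p)"
    using g by (simp add: Lp_space_def)
  show h_Lp: "h \<in> Lp_space p M"
    unfolding Lp_space_def using h powr_dominated
    by (auto intro!: Bochner_Integration.integrable_bound[OF int_g])
  have "Lp_norm p M h powr p = (\<integral>t. \<bar>h t\<bar> powr p \<partial>M)"
    by (rule Lp_norm_powr[OF p])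
  also have "\<dots> \<le> (\<integral>t. c powr p * \<bar>g t\<bar> powr p \<partial>M)"
    using h_Lp by (intro integral_mono_AE[OF _ int_g powr_dominated]) (simp add: Lp_space_def)
  also have "\<dots> = c powr p * Lp_norm p M g powr p"
    by (simp add: Lp_norm_powr[OF p])
  also have "\<dots> = (c * Lp_norm p M g) powr p"
    using c by (simp add: powr_mult Lp_norm_nonneg)
  finally show "Lp_norm p M h \<le> c * Lp_norm p M g"
    by (rule powr_le_powr_imp_le[OF p Lp_norm_nonneg mult_nonneg_nonneg[OF c Lp_norm_nonneg]])
qed

lemma Lp_space_add:
  assumes p: "1 \<le> p" and f: "f \<in> Lp_space p M" and g: "g \<in> Lp_space p M"
  shows "(\<lambda>t. f t + g t) \<in> Lp_space p M"
proof -
  have bound: "integrable M (\<lambda>t. 2 powr (p - 1) * (\<bar>f t\<bar> powr p + \<bar>g t\<bar> powr p))"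
    using f g by (auto simp: Lp_space_def)
  have meas: "(\<lambda>t. f t + g t) \<in> borel_measurable M"
    using f g by (auto simp: Lp_space_def)
  have "integrable M (\<lambda>t. \<bar>f t + g t\<bar> powr p)"
    by (rule Bochner_Integration.integrable_bound[OF bound])
       (use meas in \<open>simp_all add: abs_add_powr_le[OF p]\<close>)
  with meas show ?thesis
    by (simp add: Lp_space_def)
qed

lemma Lp_norm_add_powr_le:
  assumes p: "1 \<le> p" and f: "f \<in> Lp_space p M" and g: "g \<in> Lp_space p M"
  shows "Lp_norm p M (\<lambda>t. f t + g t) powr p
    \<le> 2 powr (p - 1) * (Lp_norm p M f powr p + Lp_norm p M g powr p)"
proof -
  have "(\<integral>t. \<bar>f t + g t\<bar> powr p \<partial>M)
      \<le> (\<integral>t. 2 powr (p - 1) * (\<bar>f t\<bar> powr p + \<bar>g t\<bar> powr p) \<partial>M)"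
    using Lp_space_add[OF p f g] f g
    by (intro integral_mono abs_add_powr_le[OF p]) (auto simp: Lp_space_def)
  also have "\<dots> = 2 powr (p - 1) * ((\<integral>t. \<bar>f t\<bar> powr p \<partial>M) + (\<integral>t. \<bar>g t\<bar> powr p \<partial>M))"
    using f g by (simp add: Lp_space_def)
  finally show ?thesis
    using p by (simp add: Lp_norm_powr)
qed

lemma Lp_space_cmult: "f \<in> Lp_space p M \<Longrightarrow> (\<lambda>t. c * f t) \<in> Lp_space p M"
  by (auto simp: Lp_space_def abs_mult powr_mult)

lemma Lp_space_diff:
  "1 \<le> p \<Longrightarrow> f \<in> Lp_space p M \<Longrightarrow> g \<in> Lp_space p M \<Longrightarrow> (\<lambda>t. f t - g t) \<in> Lp_space p M"
  using Lp_space_add[OF _ _ Lp_space_cmult[of g p M "-1"]] by simp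

lemma Lp_space_sum:
  assumes "1 \<le> p" "\<And>m. b m \<in> Lp_space p M"
  shows "(\<lambda>t. \<Sum>m<(n::nat). c m * b m t) \<in> Lp_space p M"
proof (induction n)
  case 0
  then show ?case by (simp add: Lp_space_def)
next
  case (Suc n)
  then show ?case using Lp_space_add[OF assms(1) Suc Lp_space_cmult[OF assms(2)]] by simp
qed

lemma Lp_norm_cong_AE:
  "AE t in M. f t = g t \<Longrightarrow> f \<in> borel_measurable M \<Longrightarrow> g \<in> borel_measurable M
    \<Longrightarrow> Lp_norm p M f = Lp_norm p M g"
  unfolding Lp_norm_def by (subst integral_cong_AE) auto

lemma Lp_norm_diff_powr_le:
  assumes p: "1 \<le> p" and f: "f \<in> Lp_space p M" and g: "g \<in> Lp_space p M"
  shows "Lp_norm p M (\<lambda>t. f t - g t) powr p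
    \<le> 2 powr (p - 1) * (Lp_norm p M f powr p + Lp_norm p M g powr p)"
proof -
  have "(\<lambda>t. - g t) \<in> Lp_space p M"
    using Lp_space_cmult[OF g, of "-1"] by simp
  moreover have "Lp_norm p M (\<lambda>t. - g t) = Lp_norm p M g"
    by (simp add: Lp_norm_def)
  ultimately show ?thesis
    using Lp_norm_add_powr_le[OF p f] by fastforce
qed

lemma AE_abs_le_of_esssup_less:
  assumes "esssup M (\<lambda>t. ereal \<bar>f t\<bar>) < ereal c"
  shows "AE t in M. \<bar>f t\<bar> \<le> c"
proof (rule eventually_mono[OF esssup_AE])
  fix t assume "ereal \<bar>f t\<bar> \<le> esssup M (\<lambda>t. ereal \<bar>f t\<bar>)"
  then have "ereal \<bar>f t\<bar> < ereal c"
    using assms by (rule le_less_trans)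
  then show "\<bar>f t\<bar> \<le> c"
    by simp
qed

section \<open>Measure-preserving maps\<close>

definition measure_preserving :: "'a measure \<Rightarrow> ('a \<Rightarrow> 'a) \<Rightarrow> bool" where
  "measure_preserving M T \<longleftrightarrow> T \<in> M \<rightarrow>\<^sub>M M \<and> distr M M T = M"

lemma measure_preserving_measurable: "measure_preserving M T \<Longrightarrow> T \<in> M \<rightarrow>\<^sub>M M"
  by (simp add: measure_preserving_def)

lemma measure_preserving_funpow:
  assumes T: "measure_preserving M T"
  shows "measure_preserving M (T ^^ k)"
proof (induction k)
  case 0
  then show ?case by (simp add: measure_preserving_def distr_id[unfolded id_def])
next
  case (Suc k)
  have T_meas: "T \<in> M \<rightarrow>\<^sub>M M" and T_distr: "distr M M T = M"
    using T by (auto simp: measure_preserving_def)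
  have Tk_meas: "T ^^ k \<in> M \<rightarrow>\<^sub>M M" and Tk_distr: "distr M M (T ^^ k) = M"
    using Suc by (auto simp: measure_preserving_def)
  have "distr M M (T ^^ k \<circ> T) = distr (distr M M T) M (T ^^ k)"
    by (rule distr_distr[symmetric, OF Tk_meas T_meas])
  then show ?case
    unfolding measure_preserving_def funpow_Suc_right
    using T_distr Tk_distr measurable_comp[OF T_meas Tk_meas] by metis
qed

lemma AE_measure_preserving:
  assumes T: "measure_preserving M T" and P: "AE y in M. P y"
  shows "AE y in M. P (T y)"
proof -
  have distr_T: "distr M M T = M"
    using T by (simp add: measure_preserving_def)
  have "AE y in distr M M T. P y"
    unfolding distr_T by (rule P)
  then show ?thesis
    using T by (auto simp: measure_preserving_def dest: AE_distrD)
qed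

lemma nn_integral_measure_preserving:
  assumes "measure_preserving M T" "f \<in> borel_measurable M"
  shows "(\<integral>\<^sup>+y. f (T y) \<partial>M) = integral\<^sup>N M f"
  using nn_integral_distr[of T M M f] assms by (simp add: measure_preserving_def)

lemma
  assumes T: "measure_preserving M T" and h: "h \<in> Lp_space p M"
  shows Lp_space_measure_preserving: "(\<lambda>y. h (T y)) \<in> Lp_space p M"
    and Lp_norm_measure_preserving: "Lp_norm p M (\<lambda>y. h (T y)) = Lp_norm p M h"
proof -
  have T_meas: "T \<in> M \<rightarrow>\<^sub>M M" and T_distr: "distr M M T = M"
    using T by (auto simp: measure_preserving_def)
  have h_powr: "(\<lambda>t. \<bar>h t\<bar> powr p) \<in> borel_measurable M"
    using h by (simp add: Lp_space_def borel_measurable_integrable)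
  show "(\<lambda>y. h (T y)) \<in> Lp_space p M"
    using h integrable_distr_eq[OF T_meas h_powr] T_distr measurable_compose[OF T_meas]
    by (auto simp: Lp_space_def)
  show "Lp_norm p M (\<lambda>y. h (T y)) = Lp_norm p M h"
    using integral_distr[OF T_meas h_powr] T_distr by (simp add: Lp_norm_def)
qed

lemma nn_integral_orbit_series:
  assumes T: "measure_preserving M T" and b [measurable]: "b \<in> borel_measurable M"
  shows "(\<integral>\<^sup>+y. (\<Sum>k. ennreal ((1/2)^Suc k * \<bar>b ((T ^^ k) y)\<bar> powr p)) \<partial>M)
    = (\<integral>\<^sup>+y. \<bar>b y\<bar> powr p \<partial>M)"
proof -
  note Tk_meas [measurable] = measure_preserving_measurable[OF measure_preserving_funpow[OF T]]
  have summand_integral: "(\<integral>\<^sup>+y. ennreal ((1/2)^Suc k * \<bar>b ((T ^^ k) y)\<bar> powr p) \<partial>M)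
      = ennreal ((1/2)^Suc k) * (\<integral>\<^sup>+y. \<bar>b y\<bar> powr p \<partial>M)" for k
  proof -
    have "(\<integral>\<^sup>+y. ennreal ((1/2)^Suc k * \<bar>b ((T ^^ k) y)\<bar> powr p) \<partial>M)
        = (\<integral>\<^sup>+y. ennreal ((1/2)^Suc k) * \<bar>b ((T ^^ k) y)\<bar> powr p \<partial>M)"
      by (intro nn_integral_cong ennreal_mult) auto
    also have "\<dots> = ennreal ((1/2)^Suc k) * (\<integral>\<^sup>+y. \<bar>b ((T ^^ k) y)\<bar> powr p \<partial>M)"
      by (rule nn_integral_cmult) measurable
    also have "(\<integral>\<^sup>+y. \<bar>b ((T ^^ k) y)\<bar> powr p \<partial>M) = (\<integral>\<^sup>+y. \<bar>b y\<bar> powr p \<partial>M)"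
      by (rule nn_integral_measure_preserving[OF measure_preserving_funpow[OF T]]) measurable
    finally show ?thesis .
  qed
  have "(\<integral>\<^sup>+y. (\<Sum>k. ennreal ((1/2)^Suc k * \<bar>b ((T ^^ k) y)\<bar> powr p)) \<partial>M)
      = (\<Sum>k. \<integral>\<^sup>+y. ennreal ((1/2)^Suc k * \<bar>b ((T ^^ k) y)\<bar> powr p) \<partial>M)"
    by (rule nn_integral_suminf) measurable
  also have "\<dots> = (\<Sum>k. ennreal ((1/2)^Suc k)) * (\<integral>\<^sup>+y. \<bar>b y\<bar> powr p \<partial>M)"
    unfolding summand_integral by (rule ennreal_suminf_multc)
  also have "(\<Sum>k. ennreal ((1/2::real)^Suc k)) = 1"
    using power_half_series by (subst suminf_ennreal2) (auto simp: sums_iff)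
  finally show ?thesis
    by simp
qed

section \<open>Weighted composition operators\<close>

locale contractive_weighted_composition =
  fixes p :: real and M :: "real measure" and T :: "real \<Rightarrow> real" and a :: "real \<Rightarrow> real"
  assumes p_ge_1: "1 \<le> p"
    and T_preserving: "measure_preserving M T"
    and a_measurable: "a \<in> borel_measurable M"
    and a_bound: "AE y in M. \<bar>a y\<bar> \<le> 1/2"
begin

definition wcomp :: "(real \<Rightarrow> real) \<Rightarrow> real \<Rightarrow> real" where
  "wcomp h y = a y * h (T y)"

lemma
  assumes h: "h \<in> Lp_space p M"
  shows Lp_space_wcomp: "wcomp h \<in> Lp_space p M"
    and Lp_norm_wcomp_le: "Lp_norm p M (wcomp h) \<le> 1/2 * Lp_norm p M h"
proof -
  have hT: "(\<lambda>y. h (T y)) \<in> Lp_space p M"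
    by (rule Lp_space_measure_preserving[OF T_preserving h])
  have meas: "wcomp h \<in> borel_measurable M"
    unfolding wcomp_def[abs_def]
    by (intro borel_measurable_times a_measurable Lp_space_measurable[OF hT])
  have dominated: "AE y in M. \<bar>wcomp h y\<bar> \<le> 1/2 * \<bar>h (T y)\<bar>"
    using a_bound
  proof eventually_elim
    case (elim y)
    then show ?case
      unfolding wcomp_def abs_mult by (rule mult_right_mono) simp
  qed
  show "wcomp h \<in> Lp_space p M" "Lp_norm p M (wcomp h) \<le> 1/2 * Lp_norm p M h"
    using Lp_norm_mono_AE[OF _ hT meas _ dominated] p_ge_1
      Lp_norm_measure_preserving[OF T_preserving h] by simp_all
qed

lemma Lp_norm_wcomp_powr_le:
  assumes h: "h \<in> Lp_space p M"
  shows "2 powr p * Lp_norm p M (wcomp h) powr p \<le> Lp_norm p M h powr p"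
proof -
  have "(2 * Lp_norm p M (wcomp h)) powr p \<le> Lp_norm p M h powr p"
    using Lp_norm_wcomp_le[OF h] p_ge_1 by (intro powr_mono2) (auto simp: Lp_norm_nonneg)
  then show ?thesis by (simp add: powr_mult Lp_norm_nonneg)
qed

text \<open>Both bounds below use the quasi-triangle inequality; the constant \<open>1/2\<close> in
  \<open>a_bound\<close> is exactly what lets the term \<open>2 powr (p - 1) * Lp_norm p M (wcomp h) powr p\<close>
  be absorbed.\<close>

lemma Lp_norm_sub_wcomp_le:
  assumes h: "h \<in> Lp_space p M"
  shows "Lp_norm p M (\<lambda>y. h y - wcomp h y) \<le> 2 * Lp_norm p M h"
proof (rule powr_le_powr_imp_le)
  define q where "q = (2::real) powr (p - 1)"
  have q: "1/2 \<le> q" "2 powr p = 2 * q"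
    using p_ge_1 ge_one_powr_ge_zero[of 2 "p - 1"] by (auto simp: q_def powr_diff)
  have "Lp_norm p M (\<lambda>y. h y - wcomp h y) powr p
      \<le> q * Lp_norm p M h powr p + q * Lp_norm p M (wcomp h) powr p"
    using Lp_norm_diff_powr_le[OF p_ge_1 h Lp_space_wcomp[OF h]] by (simp add: q_def distrib_left)
  also have "\<dots> \<le> 2 * q * Lp_norm p M h powr p"
    using Lp_norm_wcomp_powr_le[OF h] mult_right_mono[OF q(1), of "Lp_norm p M h powr p"]
    by (simp add: q(2))
  also have "\<dots> = (2 * Lp_norm p M h) powr p"
    by (simp add: powr_mult Lp_norm_nonneg q(2))
  finally show "Lp_norm p M (\<lambda>y. h y - wcomp h y) powr p \<le> (2 * Lp_norm p M h) powr p" .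
qed (use p_ge_1 in \<open>auto simp: Lp_norm_nonneg\<close>)

lemma Lp_norm_le_sub_wcomp:
  assumes h: "h \<in> Lp_space p M"
  shows "Lp_norm p M h \<le> 2 * Lp_norm p M (\<lambda>y. h y - wcomp h y)"
proof (rule powr_le_powr_imp_le)
  define q where "q = (2::real) powr (p - 1)"
  have q: "2 powr p = 2 * q"
    by (simp add: q_def powr_diff)
  have Bh: "(\<lambda>y. h y - wcomp h y) \<in> Lp_space p M"
    by (rule Lp_space_diff[OF p_ge_1 h Lp_space_wcomp[OF h]])
  have "Lp_norm p M h powr p
      \<le> q * Lp_norm p M (\<lambda>y. h y - wcomp h y) powr p + q * Lp_norm p M (wcomp h) powr p"
    using Lp_norm_add_powr_le[OF p_ge_1 Bh Lp_space_wcomp[OF h]] by (simp add: q_def distrib_left)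
  then have "Lp_norm p M h powr p \<le> 2 * q * Lp_norm p M (\<lambda>y. h y - wcomp h y) powr p"
    using Lp_norm_wcomp_powr_le[OF h] by (simp add: q)
  also have "\<dots> = (2 * Lp_norm p M (\<lambda>y. h y - wcomp h y)) powr p"
    by (simp add: powr_mult Lp_norm_nonneg q)
  finally show "Lp_norm p M h powr p \<le> (2 * Lp_norm p M (\<lambda>y. h y - wcomp h y)) powr p" .
qed (use p_ge_1 in \<open>auto simp: Lp_norm_nonneg\<close>)

lemma AE_orbit_bound: "AE y in M. \<forall>j. \<bar>a ((T ^^ j) y)\<bar> \<le> 1/2"
  unfolding AE_all_countable
  using AE_measure_preserving[OF measure_preserving_funpow[OF T_preserving] a_bound] by blast

definition orbit_weight :: "nat \<Rightarrow> real \<Rightarrow> real" where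
  "orbit_weight k y = (\<Prod>j<k. a ((T ^^ j) y))"

lemma orbit_weight_0 [simp]: "orbit_weight 0 y = 1"
  by (simp add: orbit_weight_def)

lemma orbit_weight_Suc: "orbit_weight (Suc k) y = a y * orbit_weight k (T y)"
  unfolding orbit_weight_def prod.lessThan_Suc_shift by (simp add: funpow_swap1)

lemma abs_orbit_weight_le:
  assumes "\<forall>j. \<bar>a ((T ^^ j) y)\<bar> \<le> 1/2"
  shows "\<bar>orbit_weight k y\<bar> \<le> (1/2)^k"
proof -
  have "\<bar>orbit_weight k y\<bar> = (\<Prod>j<k. \<bar>a ((T ^^ j) y)\<bar>)"
    by (simp add: orbit_weight_def abs_prod)
  also have "\<dots> \<le> (\<Prod>j<k. 1/2)"
    using assms by (intro prod_mono) auto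
  finally show ?thesis by simp
qed

lemma funpow_T_measurable: "T ^^ k \<in> M \<rightarrow>\<^sub>M M"
  by (rule measure_preserving_measurable[OF measure_preserving_funpow[OF T_preserving]])

lemma orbit_weight_measurable: "orbit_weight k \<in> borel_measurable M"
  unfolding orbit_weight_def[abs_def]
  by (intro borel_measurable_prod measurable_compose[OF funpow_T_measurable a_measurable])

lemma orbit_series_fixed_point:
  assumes "summable (\<lambda>k. orbit_weight k (T y) * b ((T ^^ k) (T y)))"
  shows "(\<Sum>k. orbit_weight k y * b ((T ^^ k) y))
    = b y + a y * (\<Sum>k. orbit_weight k (T y) * b ((T ^^ k) (T y)))"
proof -
  have "(\<lambda>k. orbit_weight (Suc k) y * b ((T ^^ Suc k) y))
      sums (a y * (\<Sum>k. orbit_weight k (T y) * b ((T ^^ k) (T y))))"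
    using sums_mult[OF summable_sums[OF assms], of "a y"]
    by (simp add: orbit_weight_Suc funpow_Suc_right mult.assoc del: funpow.simps)
  then have "(\<lambda>k. orbit_weight k y * b ((T ^^ k) y))
      sums (a y * (\<Sum>k. orbit_weight k (T y) * b ((T ^^ k) (T y))) + b y)"
    using sums_Suc_iff[of "\<lambda>k. orbit_weight k y * b ((T ^^ k) y)"] by simp
  then show ?thesis
    by (simp add: sums_iff)
qed

lemma orbit_series_bound:
  assumes orbit: "\<forall>j. \<bar>a ((T ^^ j) y)\<bar> \<le> 1/2"
    and summable: "summable (\<lambda>k. (1/2)^Suc k * \<bar>b ((T ^^ k) y)\<bar> powr p)"
  shows "summable (\<lambda>k. \<bar>orbit_weight k y * b ((T ^^ k) y)\<bar>)"
    and "\<bar>\<Sum>k. orbit_weight k y * b ((T ^^ k) y)\<bar> powr p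
      \<le> 2 powr p * (\<Sum>k. (1/2)^Suc k * \<bar>b ((T ^^ k) y)\<bar> powr p)"
proof -
  have "\<bar>orbit_weight k y * b ((T ^^ k) y)\<bar> \<le> (1/2)^k * \<bar>b ((T ^^ k) y)\<bar>" for k
    using abs_orbit_weight_le[OF orbit, of k] by (simp add: abs_mult mult_right_mono)
  then show "summable (\<lambda>k. \<bar>orbit_weight k y * b ((T ^^ k) y)\<bar>)"
    and "\<bar>\<Sum>k. orbit_weight k y * b ((T ^^ k) y)\<bar> powr p
      \<le> 2 powr p * (\<Sum>k. (1/2)^Suc k * \<bar>b ((T ^^ k) y)\<bar> powr p)"
    using geometric_dominated_series_powr[OF p_ge_1 _ _ summable] by auto
qed

lemma AE_summable_orbit_powr:
  assumes b: "b \<in> Lp_space p M"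
  shows "AE y in M. summable (\<lambda>k. (1/2)^Suc k * \<bar>b ((T ^^ k) y)\<bar> powr p)"
proof -
  have b_meas [measurable]: "b \<in> borel_measurable M"
    using b by (rule Lp_space_measurable)
  note funpow_T_measurable [measurable]
  have "(\<integral>\<^sup>+y. (\<Sum>k. ennreal ((1/2)^Suc k * \<bar>b ((T ^^ k) y)\<bar> powr p)) \<partial>M)
      = (\<integral>\<^sup>+y. \<bar>b y\<bar> powr p \<partial>M)"
    by (rule nn_integral_orbit_series[OF T_preserving b_meas])
  also have "\<dots> < \<infinity>"
    using b by (simp add: Lp_space_iff_nn_integral)
  finally have "(\<integral>\<^sup>+y. (\<Sum>k. ennreal ((1/2)^Suc k * \<bar>b ((T ^^ k) y)\<bar> powr p)) \<partial>M) \<noteq> \<infinity>"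
    by simp
  then have "AE y in M. (\<Sum>k. ennreal ((1/2)^Suc k * \<bar>b ((T ^^ k) y)\<bar> powr p)) \<noteq> \<infinity>"
    by (intro nn_integral_noteq_infinite) measurable
  then show ?thesis
  proof eventually_elim
    case (elim y)
    show ?case
      by (rule summable_suminf_not_top) (use elim in simp_all)
  qed
qed

lemma exists_Lp_fixed_point:
  assumes b: "b \<in> Lp_space p M"
  shows "\<exists>d \<in> Lp_space p M. AE y in M. d y = b y + wcomp d y"
proof -
  have b_meas [measurable]: "b \<in> borel_measurable M"
    using b by (rule Lp_space_measurable)
  note funpow_T_measurable [measurable] orbit_weight_measurable [measurable]
  define d where "d y = (\<Sum>k. orbit_weight k y * b ((T ^^ k) y))" for y
  define good where "good y \<longleftrightarrow> (\<forall>j. \<bar>a ((T ^^ j) y)\<bar> \<le> 1/2)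
    \<and> summable (\<lambda>k. (1/2)^Suc k * \<bar>b ((T ^^ k) y)\<bar> powr p)" for y
  have AE_good: "AE y in M. good y"
    using AE_orbit_bound AE_summable_orbit_powr[OF b] by eventually_elim (simp add: good_def)
  have "AE y in M. good (T y)"
    by (rule AE_measure_preserving[OF T_preserving AE_good])
  then have fixed_point: "AE y in M. d y = b y + wcomp d y"
  proof eventually_elim
    case (elim y)
    then have "\<forall>j. \<bar>a ((T ^^ j) (T y))\<bar> \<le> 1/2"
      and "summable (\<lambda>k. (1/2)^Suc k * \<bar>b ((T ^^ k) (T y))\<bar> powr p)"
      by (simp_all add: good_def)
    then have "summable (\<lambda>k. orbit_weight k (T y) * b ((T ^^ k) (T y)))"
      by (rule summable_rabs_cancel[OF orbit_series_bound(1)])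
    then show ?case
      unfolding d_def wcomp_def by (rule orbit_series_fixed_point)
  qed
  have "ennreal (\<bar>d y\<bar> powr p)
      \<le> ennreal (2 powr p) * (\<Sum>k. ennreal ((1/2)^Suc k * \<bar>b ((T ^^ k) y)\<bar> powr p))"
    if "good y" for y
  proof -
    have "ennreal (\<bar>d y\<bar> powr p)
        \<le> ennreal (2 powr p * (\<Sum>k. (1/2)^Suc k * \<bar>b ((T ^^ k) y)\<bar> powr p))"
      using that unfolding d_def good_def by (intro ennreal_leI orbit_series_bound(2)) auto
    also have "\<dots> = ennreal (2 powr p) * (\<Sum>k. ennreal ((1/2)^Suc k * \<bar>b ((T ^^ k) y)\<bar> powr p))"
      using that unfolding good_def by (simp add: ennreal_mult' suminf_ennreal2)
    finally show ?thesis .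
  qed
  then have "(\<integral>\<^sup>+y. \<bar>d y\<bar> powr p \<partial>M)
      \<le> (\<integral>\<^sup>+y. ennreal (2 powr p) * (\<Sum>k. ennreal ((1/2)^Suc k * \<bar>b ((T ^^ k) y)\<bar> powr p)) \<partial>M)"
    using AE_good by (intro nn_integral_mono_AE) auto
  also have "\<dots> = ennreal (2 powr p) * (\<integral>\<^sup>+y. \<bar>b y\<bar> powr p \<partial>M)"
    unfolding nn_integral_orbit_series[OF T_preserving b_meas, symmetric]
    by (rule nn_integral_cmult) measurable
  also have "\<dots> < \<infinity>"
    using b by (simp add: Lp_space_iff_nn_integral ennreal_mult_less_top)
  finally have "(\<integral>\<^sup>+y. \<bar>d y\<bar> powr p \<partial>M) < \<infinity>" .
  moreover have "d \<in> borel_measurable M"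
    unfolding d_def by measurable
  ultimately have "d \<in> Lp_space p M"
    by (simp add: Lp_space_iff_nn_integral)
  with fixed_point show ?thesis
    by blast
qed

end

section \<open>Transfer of Schauder bases\<close>

lemma LIMSEQ_zero_iff_comparable:
  fixes u v :: "nat \<Rightarrow> real"
  assumes "\<And>n. 0 \<le> u n" "\<And>n. 0 \<le> v n" "\<And>n. u n \<le> C * v n" "\<And>n. v n \<le> C * u n"
  shows "u \<longlonglongrightarrow> 0 \<longleftrightarrow> v \<longlonglongrightarrow> 0"
proof
  assume u: "u \<longlonglongrightarrow> 0"
  show "v \<longlonglongrightarrow> 0"
    by (rule Lim_null_comparison[OF always_eventually tendsto_mult_right_zero[OF u]])
       (use assms in auto)
next
  assume v: "v \<longlonglongrightarrow> 0"
  show "u \<longlonglongrightarrow> 0"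
    by (rule Lim_null_comparison[OF always_eventually tendsto_mult_right_zero[OF v]])
       (use assms in auto)
qed

lemma schauder_basis_transfer:
  fixes B :: "(real \<Rightarrow> real) \<Rightarrow> real \<Rightarrow> real"
  assumes p: "1 \<le> p" and basis: "schauder_basis p M b" and D: "\<And>m. D m \<in> Lp_space p M"
    and B_Lp: "\<And>h. h \<in> Lp_space p M \<Longrightarrow> B h \<in> Lp_space p M"
    and upper: "\<And>h. h \<in> Lp_space p M \<Longrightarrow> Lp_norm p M (B h) \<le> C * Lp_norm p M h"
    and lower: "\<And>h. h \<in> Lp_space p M \<Longrightarrow> Lp_norm p M h \<le> C * Lp_norm p M (B h)"
    and partial_sums: "\<And>f c n. f \<in> Lp_space p M \<Longrightarrow>
      AE t in M. B (\<lambda>t. f t - (\<Sum>m<n. c m * D m t)) t = B f t - (\<Sum>m<n. c m * b m t)"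
  shows "schauder_basis p M D"
proof -
  have b: "\<And>m. b m \<in> Lp_space p M"
    and b_unique: "\<forall>f\<in>Lp_space p M. \<exists>!c :: nat \<Rightarrow> real.
      (\<lambda>n. Lp_norm p M (\<lambda>t. f t - (\<Sum>m<n. c m * b m t))) \<longlonglongrightarrow> 0"
    using basis by (auto simp: schauder_basis_def)
  have converges_iff:
    "(\<lambda>n. Lp_norm p M (\<lambda>t. f t - (\<Sum>m<n. c m * D m t))) \<longlonglongrightarrow> 0
      \<longleftrightarrow> (\<lambda>n. Lp_norm p M (\<lambda>t. B f t - (\<Sum>m<n. c m * b m t))) \<longlonglongrightarrow> 0"
    if f: "f \<in> Lp_space p M" for f and c :: "nat \<Rightarrow> real"
  proof -
    define r where "r n = (\<lambda>t. f t - (\<Sum>m<n. c m * D m t))" for n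
    have r: "r n \<in> Lp_space p M" for n
      unfolding r_def by (rule Lp_space_diff[OF p f Lp_space_sum[OF p D]])
    have "Lp_norm p M (B (r n)) = Lp_norm p M (\<lambda>t. B f t - (\<Sum>m<n. c m * b m t))" for n
      using partial_sums[OF f] B_Lp[OF r] Lp_space_diff[OF p B_Lp[OF f] Lp_space_sum[OF p b]]
      unfolding r_def by (intro Lp_norm_cong_AE) (auto simp: Lp_space_def)
    moreover have "(\<lambda>n. Lp_norm p M (r n)) \<longlonglongrightarrow> 0 \<longleftrightarrow> (\<lambda>n. Lp_norm p M (B (r n))) \<longlonglongrightarrow> 0"
      using upper[OF r] lower[OF r] by (intro LIMSEQ_zero_iff_comparable) (auto simp: Lp_norm_nonneg)
    ultimately show ?thesis
      by (simp add: r_def)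
  qed
  \<comment> \<open>the coefficients of \<open>f\<close> with respect to \<open>D\<close> are those of \<open>B f\<close> with respect to \<open>b\<close>\<close>
  show ?thesis
    unfolding schauder_basis_def
  proof (intro conjI allI ballI D)
    fix f assume f: "f \<in> Lp_space p M"
    show "\<exists>!c :: nat \<Rightarrow> real. (\<lambda>n. Lp_norm p M (\<lambda>t. f t - (\<Sum>m<n. c m * D m t))) \<longlonglongrightarrow> 0"
      using b_unique B_Lp[OF f] by (simp add: converges_iff[OF f])
  qed
qed

lemma bounded_seq_transfer:
  assumes bounded: "bounded_seq p M b" and C: "0 < C"
    and upper: "\<And>m. Lp_norm p M (D m) \<le> C * Lp_norm p M (b m)"
    and lower: "\<And>m. Lp_norm p M (b m) \<le> C * Lp_norm p M (D m)"
  shows "bounded_seq p M D"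
proof -
  obtain k K where kK: "0 < k" "\<And>m. k \<le> Lp_norm p M (b m) \<and> Lp_norm p M (b m) \<le> K"
    using bounded unfolding bounded_seq_def by blast
  have D_lower: "k / C \<le> Lp_norm p M (D m)" for m
    using kK(2)[of m] lower[of m] C by (simp add: divide_le_eq mult.commute)
  have D_upper: "Lp_norm p M (D m) \<le> C * K" for m
    using kK(2)[of m] upper[of m] C by (meson mult_left_mono less_le_not_le order_trans)
  show ?thesis
    unfolding bounded_seq_def
    using kK(1) C D_lower D_upper order_trans[OF D_lower D_upper]
    by (intro exI[of _ "k / C"] exI[of _ "C * K"]) auto
qed

context contractive_weighted_composition
begin

lemma schauder_basis_sub_wcomp:
  assumes basis: "schauder_basis p M b" and D: "\<And>m. D m \<in> Lp_space p M"
    and D_b: "AE y in M. \<forall>m. D m y - wcomp (D m) y = b m y"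
  shows "schauder_basis p M D \<and> (bounded_seq p M b \<longrightarrow> bounded_seq p M D)"
proof
  have B_Lp: "(\<lambda>y. h y - wcomp h y) \<in> Lp_space p M" if "h \<in> Lp_space p M" for h
    by (rule Lp_space_diff[OF p_ge_1 that Lp_space_wcomp[OF that]])
  have linear: "f y - (\<Sum>m<n. c m * D m y) - wcomp (\<lambda>t. f t - (\<Sum>m<n. c m * D m t)) y
      = f y - wcomp f y - (\<Sum>m<n. c m * (D m y - wcomp (D m) y))" for f y n and c :: "nat \<Rightarrow> real"
    by (simp add: wcomp_def sum_subtractf[symmetric] sum_distrib_left algebra_simps sum_negf)
  show "schauder_basis p M D"
    by (rule schauder_basis_transfer[OF p_ge_1 basis D B_Lp Lp_norm_sub_wcomp_le Lp_norm_le_sub_wcomp])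
       (use D_b in \<open>auto elim!: eventually_mono simp: linear\<close>)
  have "Lp_norm p M (\<lambda>y. D m y - wcomp (D m) y) = Lp_norm p M (b m)" for m
    using D_b B_Lp[OF D] basis
    by (intro Lp_norm_cong_AE) (auto elim!: eventually_mono simp: Lp_space_def schauder_basis_def)
  then show "bounded_seq p M b \<longrightarrow> bounded_seq p M D"
    using bounded_seq_transfer[of p M b 2 D] Lp_norm_sub_wcomp_le[OF D] Lp_norm_le_sub_wcomp[OF D]
    by simp
qed

end

section \<open>The partition and its shift map\<close>

locale affine_partition =
  fixes N :: nat and x :: "nat \<Rightarrow> real"
  assumes N_pos: "0 < N" and x_strict: "\<forall>i<N. x i < x (Suc i)"
begin

abbreviation I :: "real set" where
  "I \<equiv> {x 0..x N}"

lemma x_less: "i < j \<Longrightarrow> j \<le> N \<Longrightarrow> x i < x j"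
proof (induction j)
  case 0
  then show ?case by simp
next
  case (Suc j)
  then show ?case
    using x_strict by (cases "i = j") (auto intro: less_trans)
qed

lemma x_le: "i \<le> j \<Longrightarrow> j \<le> N \<Longrightarrow> x i \<le> x j"
  using x_less[of i j] by (cases "i = j") auto

lemma Isub_subset: "Isub x n \<subseteq> {x (n - 1)..x n}"
  by (auto simp: Isub_def)

lemma Isub_subset_I: "n \<in> {1..N} \<Longrightarrow> Isub x n \<subseteq> I"
  using Isub_subset[of n] x_le[of 0 "n - 1"] x_le[of n N] by fastforce

lemma sets_Isub: "Isub x n \<in> sets lebesgue"
  by (simp add: Isub_def)

lemma Isub_disjoint:
  assumes "n \<in> {1..N}" "m \<in> {1..N}" "y \<in> Isub x n" "y \<in> Isub x m"
  shows "n = m"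
proof -
  have "\<not> n < m" if "n \<in> {1..N}" "m \<in> {1..N}" "y \<in> Isub x n" "y \<in> Isub x m" for n m
  proof
    assume "n < m"
    have "y \<le> x n"
      using that(3) Isub_subset[of n] by auto
    also have "x n \<le> x (m - 1)"
      using \<open>n < m\<close> that(2) by (intro x_le) auto
    also have "x (m - 1) < y"
      using that \<open>n < m\<close> by (auto simp: Isub_def split: if_splits)
    finally show False
      by simp
  qed
  then show ?thesis
    using assms by (meson linorder_neqE_nat)
qed

lemma Isub_cover:
  assumes "y \<in> I"
  shows "\<exists>n\<in>{1..N}. y \<in> Isub x n"
proof (cases "y = x 0")
  case True
  then show ?thesis
    using N_pos x_le[of 0 1] by (intro bexI[of _ 1]) (auto simp: Isub_def)
next
  case False
  define n where "n = (LEAST n. y \<le> x n)"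
  have y_le_xN: "y \<le> x N"
    using assms by auto
  have "y \<le> x n"
    unfolding n_def by (rule LeastI[of "\<lambda>n. y \<le> x n", OF y_le_xN])
  moreover have "n \<le> N"
    unfolding n_def by (rule Least_le[of "\<lambda>n. y \<le> x n", OF y_le_xN])
  moreover have "n \<noteq> 0"
  proof
    assume "n = 0"
    with \<open>y \<le> x n\<close> have "y \<le> x 0"
      by simp
    with False assms show False
      by auto
  qed
  moreover have "x (n - 1) < y"
    using not_less_Least[of "n - 1" "\<lambda>n. y \<le> x n"] \<open>n \<noteq> 0\<close> by (simp add: n_def[symmetric])
  ultimately show ?thesis
    by (intro bexI[of _ n]) (auto simp: Isub_def)
qed

lemma sum_Isub_single:
  assumes "n \<in> {1..N}" "y \<in> Isub x n"
  shows "(\<Sum>m\<in>{1..N}. if y \<in> Isub x m then G m else 0) = G n"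
proof -
  have "(\<Sum>m\<in>{1..N}. if y \<in> Isub x m then G m else 0) = (\<Sum>m\<in>{1..N}. if m = n then G m else 0)"
    using assms Isub_disjoint by (intro sum.cong) auto
  then show ?thesis
    using assms by simp
qed

definition scale :: "nat \<Rightarrow> real" where
  "scale n = (x n - x (n - 1)) / (x N - x 0)"

definition L :: "nat \<Rightarrow> real \<Rightarrow> real" where
  "L n t = x (n - 1) + scale n * (t - x 0)"

lemma scale_pos: "n \<in> {1..N} \<Longrightarrow> 0 < scale n"
  using x_less[of "n - 1" n] x_less[of 0 N] N_pos by (simp add: scale_def)

lemma sum_scale: "(\<Sum>n\<in>{1..N}. scale n) = 1"
proof -
  have "(\<Sum>n\<in>{1..K}. x n - x (n - 1)) = x K - x 0" for K
    by (induction K) (auto simp: sum.cl_ivl_Suc)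
  then show ?thesis
    using x_less[of 0 N] N_pos by (simp add: scale_def sum_divide_distrib[symmetric])
qed

lemma Linv_eq: "Linv x N n y = x 0 + (y - x (n - 1)) / scale n"
  by (simp add: Linv_def scale_def)

lemma
  assumes "n \<in> {1..N}"
  shows Linv_L: "Linv x N n (L n t) = t" and L_Linv: "L n (Linv x N n y) = y"
  using scale_pos[OF assms] by (simp_all add: Linv_eq L_def)

lemma vimage_Linv: "n \<in> {1..N} \<Longrightarrow> Linv x N n -` A = L n ` A"
  using Linv_L L_Linv by (force intro: rev_image_eqI)

lemma emeasure_L_image:
  assumes "n \<in> {1..N}"
  shows "emeasure lebesgue (L n ` A) = ennreal (scale n) * emeasure lebesgue A"
proof -
  have "L n = (\<lambda>t. scale n *\<^sub>R t + (x (n - 1) - scale n * x 0))"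
    by (auto simp: L_def algebra_simps)
  then show ?thesis
    using emeasure_lebesgue_affine[of "scale n" "x (n - 1) - scale n * x 0" A] scale_pos[OF assms]
    by simp
qed

lemma Linv_measurable:
  assumes "n \<in> {1..N}"
  shows "Linv x N n \<in> lebesgue \<rightarrow>\<^sub>M lebesgue"
proof -
  have "(\<lambda>y. (x 0 - x (n - 1) / scale n) + (\<Sum>j\<in>Basis. (1 / scale n * (y \<bullet> j)) *\<^sub>R j))
      \<in> lebesgue \<rightarrow>\<^sub>M lebesgue"
    using scale_pos[OF assms] by (intro lebesgue_affine_measurable) auto
  moreover have "(\<lambda>y. (x 0 - x (n - 1) / scale n) + (\<Sum>j\<in>Basis. (1 / scale n * (y \<bullet> j)) *\<^sub>R j))
      = Linv x N n"
    by (auto simp: fun_eq_iff Linv_eq diff_divide_distrib)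
  ultimately show ?thesis
    by simp
qed

lemma L_mem:
  assumes n: "n \<in> {1..N}" and t: "t \<in> I"
  shows "L n t \<in> {x (n - 1)..x n}"
proof -
  have "scale n * (t - x 0) \<le> scale n * (x N - x 0)"
    using t scale_pos[OF n] by (intro mult_left_mono) auto
  moreover have "scale n * (x N - x 0) = x n - x (n - 1)"
    using x_less[of 0 N] N_pos by (simp add: scale_def)
  ultimately show ?thesis
    using t scale_pos[OF n] by (auto simp: L_def)
qed

lemma Linv_mem:
  assumes n: "n \<in> {1..N}" and y: "y \<in> Isub x n"
  shows "Linv x N n y \<in> I"
proof -
  have "y - x (n - 1) \<le> (x N - x 0) * scale n"
    using Isub_subset[of n] y x_less[of 0 N] N_pos by (auto simp: scale_def)
  then have "(y - x (n - 1)) / scale n \<le> x N - x 0"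
    using scale_pos[OF n] by (simp add: pos_divide_le_eq)
  moreover have "0 \<le> (y - x (n - 1)) / scale n"
    using Isub_subset[of n] y scale_pos[OF n] by auto
  ultimately show ?thesis
    by (simp add: Linv_eq)
qed

lemma emeasure_Isub_vimage_Linv:
  assumes n: "n \<in> {1..N}" and A: "A \<in> sets lebesgue" "A \<subseteq> I"
  shows "emeasure lebesgue (Isub x n \<inter> Linv x N n -` A) = ennreal (scale n) * emeasure lebesgue A"
proof -
  define B where "B = Linv x N n -` A"
  have B_sets: "B \<in> sets lebesgue"
    unfolding B_def using measurable_sets[OF Linv_measurable[OF n] A(1)] by simp
  have "B \<subseteq> {x (n - 1)..x n}"
    unfolding B_def vimage_Linv[OF n] using L_mem[OF n] A(2) by auto
  then have B_split: "B = (Isub x n \<inter> B) \<union> (B \<inter> {x (n - 1)})"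
    by (auto simp: Isub_def)
  have "B \<inter> {x (n - 1)} \<in> null_sets lebesgue"
    by (rule null_sets_completion_subset[of _ "{x (n - 1)}"])
       (auto intro!: null_sets_completionI countable_imp_null_set_lborel)
  then have "emeasure lebesgue B = emeasure lebesgue (Isub x n \<inter> B)"
    by (subst B_split, intro emeasure_Un_null_set) (use B_sets sets_Isub in auto)
  then show ?thesis
    using emeasure_L_image[OF n, of A] by (simp add: B_def vimage_Linv[OF n])
qed

definition phi :: "real \<Rightarrow> real" where
  "phi y = (\<Sum>n\<in>{1..N}. if y \<in> Isub x n then Linv x N n y else 0)"

definition weight :: "(nat \<Rightarrow> real \<Rightarrow> real) \<Rightarrow> real \<Rightarrow> real" where
  "weight \<alpha> y = (\<Sum>n\<in>{1..N}. if y \<in> Isub x n then \<alpha> n (Linv x N n y) else 0)"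

lemma phi_eq: "n \<in> {1..N} \<Longrightarrow> y \<in> Isub x n \<Longrightarrow> phi y = Linv x N n y"
  unfolding phi_def by (rule sum_Isub_single)

lemma weight_eq:
  assumes "n \<in> {1..N}" "y \<in> Isub x n"
  shows "weight \<alpha> y = \<alpha> n (phi y)"
  unfolding weight_def by (subst sum_Isub_single[OF assms]) (simp add: phi_eq[OF assms])

lemma Top_eq: "Top x N \<alpha> f b g y = f y + weight \<alpha> y * (g (phi y) - b (phi y))"
proof (cases "\<exists>n\<in>{1..N}. y \<in> Isub x n")
  case True
  then obtain n where n: "n \<in> {1..N}" "y \<in> Isub x n"
    by blast
  show ?thesis
    unfolding Top_def by (subst sum_Isub_single[OF n]) (simp add: weight_eq[OF n] phi_eq[OF n])
next
  case False
  then show ?thesis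
    by (simp add: Top_def weight_def)
qed

lemma phi_mem: "y \<in> I \<Longrightarrow> phi y \<in> I"
  using Isub_cover phi_eq Linv_mem by metis

lemma sets_lebesgue_on_I: "A \<in> sets (lebesgue_on I) \<longleftrightarrow> A \<subseteq> I \<and> A \<in> sets lebesgue"
  by (subst sets_restrict_space_iff) auto

lemma vimage_phi: "phi -` A \<inter> I = (\<Union>n\<in>{1..N}. Isub x n \<inter> Linv x N n -` A)"
  using Isub_cover phi_eq Isub_subset_I by fastforce

lemma phi_measurable: "phi \<in> lebesgue_on I \<rightarrow>\<^sub>M lebesgue_on I"
proof (rule measurableI)
  show "phi y \<in> space (lebesgue_on I)" if "y \<in> space (lebesgue_on I)" for y
    using that phi_mem by simp
  fix A assume "A \<in> sets (lebesgue_on I)"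
  then have "(\<Union>n\<in>{1..N}. Isub x n \<inter> Linv x N n -` A) \<in> sets lebesgue"
    using measurable_sets[OF Linv_measurable] sets_Isub
    by (intro sets.finite_UN ballI sets.Int) (auto simp: sets_lebesgue_on_I)
  then show "phi -` A \<inter> space (lebesgue_on I) \<in> sets (lebesgue_on I)"
    using vimage_phi[of A] Isub_subset_I by (auto simp: sets_lebesgue_on_I)
qed

lemma emeasure_vimage_phi:
  assumes A: "A \<in> sets (lebesgue_on I)"
  shows "emeasure (lebesgue_on I) (phi -` A \<inter> I) = emeasure (lebesgue_on I) A"
proof -
  have A_sets: "A \<in> sets lebesgue" "A \<subseteq> I"
    using A by (auto simp: sets_lebesgue_on_I)
  have "emeasure (lebesgue_on I) (phi -` A \<inter> I)
      = emeasure lebesgue (\<Union>n\<in>{1..N}. Isub x n \<inter> Linv x N n -` A)"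
    using vimage_phi[of A] Isub_subset_I by (subst emeasure_restrict_space) auto
  also have "\<dots> = (\<Sum>n\<in>{1..N}. emeasure lebesgue (Isub x n \<inter> Linv x N n -` A))"
  proof (rule sum_emeasure[symmetric])
    show "(\<lambda>n. Isub x n \<inter> Linv x N n -` A) ` {1..N} \<subseteq> sets lebesgue"
      using measurable_sets[OF Linv_measurable A_sets(1)] sets_Isub by auto
    show "disjoint_family_on (\<lambda>n. Isub x n \<inter> Linv x N n -` A) {1..N}"
      unfolding disjoint_family_on_def using Isub_disjoint by blast
  qed simp
  also have "\<dots> = (\<Sum>n\<in>{1..N}. ennreal (scale n)) * emeasure lebesgue A"
    using emeasure_Isub_vimage_Linv[OF _ A_sets] by (simp add: sum_distrib_right)
  also have "(\<Sum>n\<in>{1..N}. ennreal (scale n)) = 1"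
    using sum_scale scale_pos by (subst sum_ennreal) (auto intro: less_imp_le)
  finally show ?thesis
    using A_sets by (simp add: emeasure_restrict_space)
qed

lemma measure_preserving_phi: "measure_preserving (lebesgue_on I) phi"
  unfolding measure_preserving_def
proof
  show "phi \<in> lebesgue_on I \<rightarrow>\<^sub>M lebesgue_on I"
    by (rule phi_measurable)
  show "distr (lebesgue_on I) (lebesgue_on I) phi = lebesgue_on I"
    by (rule measure_eqI) (simp_all add: emeasure_distr[OF phi_measurable] emeasure_vimage_phi)
qed

lemma weight_measurable:
  assumes "\<forall>n\<in>{1..N}. \<alpha> n \<in> borel_measurable (lebesgue_on I)"
  shows "weight \<alpha> \<in> borel_measurable (lebesgue_on I)"
proof -
  have "weight \<alpha> y = (\<Sum>n\<in>{1..N}. indicator (Isub x n) y * \<alpha> n (phi y))" for y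
    unfolding weight_def by (intro sum.cong) (auto simp: phi_eq)
  then have "weight \<alpha> = (\<lambda>y. \<Sum>n\<in>{1..N}. indicator (Isub x n) y * \<alpha> n (phi y))"
    by blast
  moreover have "(\<lambda>y. \<Sum>n\<in>{1..N}. indicator (Isub x n) y * \<alpha> n (phi y)) \<in> borel_measurable (lebesgue_on I)"
  proof (intro borel_measurable_sum borel_measurable_times)
    fix n assume n: "n \<in> {1..N}"
    show "(\<lambda>y. \<alpha> n (phi y)) \<in> borel_measurable (lebesgue_on I)"
      using assms n by (intro measurable_compose[OF phi_measurable]) auto
    have "Isub x n \<in> sets (lebesgue_on I)"
      using Isub_subset_I[OF n] sets_Isub by (simp add: sets_lebesgue_on_I)
    then show "indicator (Isub x n) \<in> borel_measurable (lebesgue_on I)"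
      by simp
  qed
  ultimately show ?thesis
    by simp
qed

lemma AE_weight_bound:
  assumes "\<forall>n\<in>{1..N}. AE t in lebesgue_on I. \<bar>\<alpha> n t\<bar> \<le> c"
  shows "AE y in lebesgue_on I. \<bar>weight \<alpha> y\<bar> \<le> c"
proof -
  have "AE t in lebesgue_on I. \<forall>n\<in>{1..N}. \<bar>\<alpha> n t\<bar> \<le> c"
    using assms by (intro AE_finite_allI) auto
  then have "AE y in lebesgue_on I. \<forall>n\<in>{1..N}. \<bar>\<alpha> n (phi y)\<bar> \<le> c"
    by (rule AE_measure_preserving[OF measure_preserving_phi])
  then show ?thesis
  proof (rule AE_mp[OF _ AE_I2], intro impI)
    fix y assume "y \<in> space (lebesgue_on I)" and "\<forall>n\<in>{1..N}. \<bar>\<alpha> n (phi y)\<bar> \<le> c"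
    then show "\<bar>weight \<alpha> y\<bar> \<le> c"
      using Isub_cover weight_eq by fastforce
  qed
qed

end

locale fractal_operator = affine_partition +
  fixes p :: real and \<alpha> :: "nat \<Rightarrow> real \<Rightarrow> real"
  assumes p_ge_1: "1 \<le> p"
    and \<alpha>_measurable: "\<forall>n\<in>{1..N}. \<alpha> n \<in> borel_measurable (lebesgue_on I)"
    and \<alpha>_bound: "\<forall>n\<in>{1..N}. AE t in lebesgue_on I. \<bar>\<alpha> n t\<bar> \<le> 1/2"
begin

sublocale W: contractive_weighted_composition p "lebesgue_on I" phi "weight \<alpha>"
  using p_ge_1 measure_preserving_phi weight_measurable[OF \<alpha>_measurable]
    AE_weight_bound[OF \<alpha>_bound]
  by unfold_locales

lemma frac_op_zero_fixed_point:
  assumes b: "b \<in> Lp_space p (lebesgue_on I)"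
  shows "frac_op p x N \<alpha> (\<lambda>_. 0) b \<in> Lp_space p (lebesgue_on I)
    \<and> (AE y in lebesgue_on I. frac_op p x N \<alpha> (\<lambda>_. 0) b y
         = weight \<alpha> y * (frac_op p x N \<alpha> (\<lambda>_. 0) b (phi y) - b (phi y)))"
proof -
  obtain d where d: "d \<in> Lp_space p (lebesgue_on I)"
    and d_fixed: "AE y in lebesgue_on I. d y = b y + W.wcomp d y"
    using W.exists_Lp_fixed_point[OF b] by blast
  have "(\<lambda>y. b y - d y) \<in> Lp_space p (lebesgue_on I)
      \<and> (AE y in lebesgue_on I. b y - d y = Top x N \<alpha> (\<lambda>_. 0) b (\<lambda>y. b y - d y) y)"
    using Lp_space_diff[OF p_ge_1 b d] d_fixed
    by (auto elim!: eventually_mono simp: Top_eq W.wcomp_def algebra_simps)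
  then have "\<exists>g. g \<in> Lp_space p (lebesgue_on I)
      \<and> (AE y in lebesgue_on I. g y = Top x N \<alpha> (\<lambda>_. 0) b g y)"
    by blast
  then have "frac_op p x N \<alpha> (\<lambda>_. 0) b \<in> Lp_space p (lebesgue_on I)
      \<and> (AE y in lebesgue_on I. frac_op p x N \<alpha> (\<lambda>_. 0) b y
           = Top x N \<alpha> (\<lambda>_. 0) b (frac_op p x N \<alpha> (\<lambda>_. 0) b) y)"
    unfolding frac_op_def by (rule someI_ex)
  then show ?thesis
    by (simp add: Top_eq)
qed

lemma sub_frac_op_zero:
  assumes b: "b \<in> Lp_space p (lebesgue_on I)"
  defines "D \<equiv> \<lambda>t. b t - frac_op p x N \<alpha> (\<lambda>_. 0) b t"
  shows "D \<in> Lp_space p (lebesgue_on I)" and "AE t in lebesgue_on I. D t - W.wcomp D t = b t"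
proof -
  note fixed_point = frac_op_zero_fixed_point[OF b]
  show "D \<in> Lp_space p (lebesgue_on I)"
    unfolding D_def using Lp_space_diff[OF p_ge_1 b fixed_point[THEN conjunct1]] .
  show "AE t in lebesgue_on I. D t - W.wcomp D t = b t"
    using fixed_point[THEN conjunct2]
  proof eventually_elim
    case (elim t)
    show ?case
      unfolding D_def W.wcomp_def elim by (simp add: algebra_simps)
  qed
qed

end

theorem proposition6p5:
  fixes p :: real and N :: nat and x :: "nat \<Rightarrow> real"
    and \<alpha> :: "nat \<Rightarrow> real \<Rightarrow> real" and b :: "nat \<Rightarrow> real \<Rightarrow> real"
  assumes "1 \<le> p" and "2 \<le> N"
    and "\<forall>i<N. x i < x (Suc i)"
    and "\<forall>n\<in>{1..N}. \<alpha> n \<in> borel_measurable (lebesgue_on {x 0..x N})"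
    and "\<forall>n\<in>{1..N}. esssup (lebesgue_on {x 0..x N}) (\<lambda>t. ereal \<bar>\<alpha> n t\<bar>) < ereal (1/2)"
    and "schauder_basis p (lebesgue_on {x 0..x N}) b"
  shows "schauder_basis p (lebesgue_on {x 0..x N})
           (\<lambda>m t. b m t - frac_op p x N \<alpha> (\<lambda>_. 0) (b m) t)
       \<and> ((\<forall>n\<in>{1..N}. \<exists>c::real. AE t in lebesgue_on {x 0..x N}. \<alpha> n t = c)
           \<and> bounded_seq p (lebesgue_on {x 0..x N}) b
          \<longrightarrow> bounded_seq p (lebesgue_on {x 0..x N})
                (\<lambda>m t. b m t - frac_op p x N \<alpha> (\<lambda>_. 0) (b m) t))"
proof -
  have \<alpha>_bound: "\<forall>n\<in>{1..N}. AE t in lebesgue_on {x 0..x N}. \<bar>\<alpha> n t\<bar> \<le> 1/2"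
    using assms(5) AE_abs_le_of_esssup_less by blast
  interpret fractal_operator N x p \<alpha>
    using assms(1-4) \<alpha>_bound by unfold_locales auto
  have b: "b m \<in> Lp_space p (lebesgue_on I)" for m
    using assms(6) by (simp add: schauder_basis_def)
  have "AE t in lebesgue_on I. \<forall>m. b m t - frac_op p x N \<alpha> (\<lambda>_. 0) (b m) t
      - W.wcomp (\<lambda>t. b m t - frac_op p x N \<alpha> (\<lambda>_. 0) (b m) t) t = b m t"
    unfolding AE_all_countable using sub_frac_op_zero(2)[OF b] by blast
  then have "schauder_basis p (lebesgue_on I) (\<lambda>m t. b m t - frac_op p x N \<alpha> (\<lambda>_. 0) (b m) t)
      \<and> (bounded_seq p (lebesgue_on I) b
         \<longrightarrow> bounded_seq p (lebesgue_on I) (\<lambda>m t. b m t - frac_op p x N \<alpha> (\<lambda>_. 0) (b m) t))"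
    by (rule W.schauder_basis_sub_wcomp[OF assms(6) sub_frac_op_zero(1)[OF b]])
  then show ?thesis
    by blast
qed

end
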